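(* Let $n,m,p$ be positive integers and $A\in\mathbb{R}^{n\times n}$, $B\in\mathbb{R}^{n\times m}$, $C\in\mathbb{R}^{p\times n}$, $D\in\mathbb{R}^{p\times m}$ with $DD^T$ positive definite and $BD^T=0$. Fix $\tau\in[0,1]$, $c>0$, $V_0\in\mathcal{Q}_+^n$, and let $P_k,V_k,\theta_k$ be generated by the robust Kalman filter with parameter $\tau$ and tolerance $c$; set $\Phi_k=P_{k+1}^{-1}-V_{k+1}^{-1}$. Let $k\ge0$ and let $\bar d>0$ be such that $P_{k+1}\ge\bar dI_n$. Then $$\Phi_k\le\begin{cases}\dfrac{1-(1-\theta_k(1-\tau)\bar d)^{\frac1{1-\tau}}}{\bar d}\,I_n, & 0\le\tau<1,\\[3mm] \dfrac{1-\exp(-\theta_k\bar d)}{\bar d}\,I_n, & \tau=1.\end{cases}$$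
   Context: $\mathcal{Q}_+^n$ denotes the real symmetric positive definite $n\times n$ matrices; $\le$ is the Loewner order; $\|\cdot\|$ the spectral norm. For $P$ positive semidefinite, $L_P$ is any matrix with $P=L_PL_P^T$; matrix powers and $\exp$ of symmetric matrices are defined through eigendecomposition. The function $\gamma_\tau$: for positive semidefinite $P$ and $\theta\ge0$ with $\theta(1-\tau)\|P\|<1$, $\gamma_0(P,\theta)=-\log\det((I_n-\theta P)^{-1})+\mathrm{tr}((I_n-\theta P)^{-1}-I_n)$; for $0<\tau<1$, $\gamma_\tau(P,\theta)=\mathrm{tr}\big(-\frac{1}{\tau(1-\tau)}(I_n-\theta(1-\tau)L_P^TL_P)^{\frac{\tau}{\tau-1}}+\frac1{1-\tau}(I_n-\theta(1-\tau)L_P^TL_P)^{\frac{1}{\tau-1}}+\frac1\tau I_n\big)$; $\gamma_1(P,\theta)=\mathrm{tr}(\exp(\theta L_P^TL_P)(\theta L_P^TL_P-I_n)+I_n)$. Robust Kalman filter with parameter $\tau$ and tolerance $c$: for $k=0,1,\dots$, $P_{k+1}=A(V_k^{-1}+C^T(DD^T)^{-1}C)^{-1}A^T+BB^T$; $\theta_k$ is the unique $\theta>0$ with $\theta(1-\tau)\|P_{k+1}\|<1$ and $\gamma_\tau(P_{k+1},\theta)=c$; $V_{k+1}=L_{P_{k+1}}(I_n-\theta_k(1-\tau)L_{P_{k+1}}^TL_{P_{k+1}})^{\frac1{\tau-1}}L_{P_{k+1}}^T$ if $0\le\tau<1$ and $V_{k+1}=L_{P_{k+1}}\exp(\theta_kL_{P_{k+1}}^TL_{P_{k+1}})L_{P_{k+1}}^T$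 if $\tau=1$. *)

theory Defs
  imports "HOL-Analysis.Analysis"
begin

definition posdef :: "real^'n^'n \<Rightarrow> bool" where
  "posdef S \<longleftrightarrow> transpose S = S \<and> (\<forall>x. x \<noteq> 0 \<longrightarrow> 0 < x \<bullet> (S *v x))"

definition psd :: "real^'n^'n \<Rightarrow> bool" where
  "psd S \<longleftrightarrow> transpose S = S \<and> (\<forall>x. 0 \<le> x \<bullet> (S *v x))"

definition loewner_le :: "real^'n^'n \<Rightarrow> real^'n^'n \<Rightarrow> bool" where
  "loewner_le X Y \<longleftrightarrow> psd (Y - X)"

definition specnorm :: "real^'n^'m \<Rightarrow> real" where
  "specnorm M = onorm (\<lambda>x. M *v x)"

definition mfun :: "(real \<Rightarrow> real) \<Rightarrow> real^'n^'n \<Rightarrow> real^'n^'n" where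
  "mfun f S = (THE M. \<forall>v lam. S *v v = lam *\<^sub>R v \<longrightarrow> M *v v = f lam *\<^sub>R v)"

text \<open>gamma_tau(P, theta), with L a factor P = L L^T.\<close>
definition gamma :: "real \<Rightarrow> real^'n^'n \<Rightarrow> real^'n^'n \<Rightarrow> real \<Rightarrow> real" where
  "gamma tau P L theta =
    (if tau = 0 then
       - ln (det (matrix_inv (mat 1 - theta *\<^sub>R P)))
       + trace (matrix_inv (mat 1 - theta *\<^sub>R P) - mat 1)
     else if tau < 1 then
       trace (- (1 / (tau * (1 - tau))) *\<^sub>R
                mfun (\<lambda>x. x powr (tau / (tau - 1))) (mat 1 - (theta * (1 - tau)) *\<^sub>R (transpose L ** L))
              + (1 / (1 - tau)) *\<^sub>R
                mfun (\<lambda>x. x powr (1 / (tau - 1))) (mat 1 - (theta * (1 - tau)) *\<^sub>R (transpose L ** L))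
              + (1 / tau) *\<^sub>R mat 1)
     else
       trace (mfun exp (theta *\<^sub>R (transpose L ** L)) ** (theta *\<^sub>R (transpose L ** L) - mat 1)
              + mat 1))"

end

theory Submission
  imports Defs
begin

text \<open>Write P(k+1) = L L^T and diagonalise the Gram matrix L^T L = U diag(\<mu>) U^T with U orthogonal;
  its eigenvalues are those of P(k+1), so they lie in [d, \<parallel>P(k+1)\<parallel>]. The update gives
  V(k+1) = L U diag(1 / f(\<mu>)) U^T L^T with f(x) = (1 - \<theta>(1-\<tau>)x)^(1/(1-\<tau>)), resp. f(x) = exp(-\<theta>x),
  a convex function with f(0) = 1. Hence c I - (P^-1 - V^-1) is the congruence
  L^-T U diag(c \<mu>_i - 1 + f(\<mu>_i)) U^T L^-1, and for c = (1 - f(d))/d every diagonal entry is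
  nonnegative because the secant slope (1 - f(x))/x of a convex f with f(0) = 1 is nonincreasing.\<close>

lemma convex_on_affine_compose:
  fixes f :: "real \<Rightarrow> real"
  assumes f: "convex_on S f" and T: "convex T" and maps: "\<And>x. x \<in> T \<Longrightarrow> b + a * x \<in> S"
  shows "convex_on T (\<lambda>x. f (b + a * x))"
proof (rule convex_onI[OF _ T])
  fix t x y :: real
  assume t: "0 < t" "t < 1" and xy: "x \<in> T" "y \<in> T"
  have "b + a * ((1 - t) *\<^sub>R x + t *\<^sub>R y) = (1 - t) *\<^sub>R (b + a * x) + t *\<^sub>R (b + a * y)"
    by (simp add: algebra_simps)
  then show "f (b + a * ((1 - t) *\<^sub>R x + t *\<^sub>R y)) \<le> (1 - t) * f (b + a * x) + t * f (b + a * y)"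
    using convex_onD[OF f, of t] t xy maps by simp
qed

lemma convex_on_secant_from_0:
  fixes f :: "real \<Rightarrow> real"
  assumes f: "convex_on {0..m} f" and d: "0 < d" "d \<le> m"
  shows "f 0 - f m \<le> (f 0 - f d) / d * m"
proof (cases "d = m")
  case False
  then have "(f 0 - f d) / (0 - d) \<le> (f 0 - f m) / (0 - m)"
    using convex_on_slope_le(1)[OF f, of 0 m d] d by simp
  then show ?thesis
    using d by (simp add: field_simps)
qed (use d in simp)

lemma nonneg_eq_0_if_quadratic_le_0:
  fixes r b :: real
  assumes r: "r \<ge> 0" and quad: "\<And>t. 2 * t * r + t * t * b \<le> 0"
  shows "r = 0"
proof (rule ccontr)
  assume "r \<noteq> 0"
  with r have "r > 0" by simp
  define t where "t = r / (\<bar>b\<bar> + 1)"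
  have t: "t > 0" "t * \<bar>b\<bar> \<le> r"
    using \<open>r > 0\<close> by (auto simp: t_def field_simps)
  have "t * t * \<bar>b\<bar> \<le> t * r"
    using mult_left_mono[OF t(2), of t] t by (simp add: algebra_simps)
  moreover have "- (t * t * \<bar>b\<bar>) \<le> t * t * b"
    using mult_left_mono[OF abs_ge_minus_self[of b], of "t * t"] by simp
  moreover have "t * r > 0"
    using t \<open>r > 0\<close> by simp
  ultimately show False
    using quad[of t] by linarith
qed

lemma matrix_add_rdistrib: "((A :: 'a::semiring_1^'n^'m) + B) ** C = A ** C + B ** C"
  by (simp add: vec_eq_iff matrix_matrix_mult_def sum.distrib algebra_simps)

lemma matrix_diff_ldistrib: "(C :: 'a::ring_1^'n^'m) ** (A - B) = C ** A - C ** B"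
  by (simp add: vec_eq_iff matrix_matrix_mult_def sum_subtractf algebra_simps)

lemma matrix_diff_rdistrib: "((A :: 'a::ring_1^'n^'m) - B) ** C = A ** C - B ** C"
  by (simp add: vec_eq_iff matrix_matrix_mult_def sum_subtractf algebra_simps)

lemma matrix_scaleR_mult_left: "(c *\<^sub>R (A :: real^'n^'m)) ** B = c *\<^sub>R (A ** B)"
  by (simp add: vec_eq_iff matrix_matrix_mult_def sum_distrib_left algebra_simps)

lemma matrix_scaleR_mult_right: "(A :: real^'n^'m) ** (c *\<^sub>R B) = c *\<^sub>R (A ** B)"
  by (simp add: vec_eq_iff matrix_matrix_mult_def sum_distrib_left algebra_simps)

lemmas matrix_mult_linear_simps =
  matrix_add_ldistrib matrix_add_rdistrib matrix_diff_ldistrib matrix_diff_rdistrib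
  matrix_scaleR_mult_left matrix_scaleR_mult_right

lemma column_matrix_mult: "column j (A ** B) = A *v column j B"
  by (simp add: vec_eq_iff matrix_matrix_mult_def matrix_vector_mult_def column_def)

lemma matrix_eq_iff_columns: "A = B \<longleftrightarrow> (\<forall>j. column j A = column j B)"
  by (auto simp: vec_eq_iff column_def)

lemma inner_transpose_matrix_vector: "x \<bullet> (transpose A *v y) = (A *v x) \<bullet> (y :: real^'m)"
  by (metis dot_lmul_matrix inner_commute transpose_matrix_vector)

lemma symmetric_matrix_inner:
  fixes M :: "real^'n^'n"
  assumes "transpose M = M"
  shows "x \<bullet> (M *v y) = (M *v x) \<bullet> y"
  using inner_transpose_matrix_vector[of x M y] assms by simp

lemma orthogonal_matrix_conj_cancel:
  fixes U :: "real^'n^'n"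
  assumes "orthogonal_matrix U"
  shows "U ** A ** transpose U ** U = U ** A" and "B ** U ** transpose U = B"
proof -
  have "U ** A ** transpose U ** U = U ** A ** (transpose U ** U)"
    "B ** U ** transpose U = B ** (U ** transpose U)"
    by (simp_all only: matrix_mul_assoc)
  then show "U ** A ** transpose U ** U = U ** A" "B ** U ** transpose U = B"
    using assms by (simp_all add: orthogonal_matrix_def)
qed

lemma if_zero_mult:
  "(if P then a else 0) * (b :: real) = (if P then a * b else 0)"
  "b * (if P then a else 0) = (if P then b * a else 0)"
  by simp_all

definition diag_mat :: "('n \<Rightarrow> real) \<Rightarrow> real^'n^'n" where
  "diag_mat d = (\<chi> i j. if i = j then d i else 0)"

lemma diag_mat_vector_mult: "diag_mat d *v x = (\<chi> i. d i * x $ i)"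
  by (simp add: vec_eq_iff matrix_vector_mult_def diag_mat_def if_zero_mult)

lemma transpose_diag_mat [simp]: "transpose (diag_mat d) = diag_mat d"
  by (simp add: vec_eq_iff transpose_def diag_mat_def)

lemma column_mult_diag_mat: "column j ((A :: real^'n^'m) ** diag_mat d) = d j *\<^sub>R column j A"
  by (simp add: vec_eq_iff matrix_matrix_mult_def column_def diag_mat_def if_zero_mult)

lemma diag_mat_mult: "diag_mat a ** diag_mat b = diag_mat (\<lambda>i. a i * b i)"
  by (simp add: vec_eq_iff matrix_matrix_mult_def diag_mat_def if_zero_mult)

lemma diag_mat_const: "diag_mat (\<lambda>i. c) = c *\<^sub>R mat 1"
  by (simp add: vec_eq_iff diag_mat_def mat_def)

lemma diag_mat_add: "diag_mat (\<lambda>i. a i + b i) = diag_mat a + diag_mat b"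
  by (simp add: vec_eq_iff diag_mat_def)

lemma diag_mat_diff: "diag_mat (\<lambda>i. a i - b i) = diag_mat a - diag_mat b"
  by (simp add: vec_eq_iff diag_mat_def)

lemma diag_mat_scale: "diag_mat (\<lambda>i. c * a i) = c *\<^sub>R diag_mat a"
  by (simp add: vec_eq_iff diag_mat_def)

lemma orthogonal_diag_column_eigenvector:
  fixes U :: "real^'n^'n"
  assumes U: "orthogonal_matrix U"
  shows "(U ** diag_mat d ** transpose U) *v column j U = d j *\<^sub>R column j U"
proof -
  have "(U ** diag_mat d ** transpose U) *v column j U = column j (U ** diag_mat d ** transpose U ** U)"
    by (rule column_matrix_mult[symmetric])
  also have "\<dots> = column j (U ** diag_mat d)"
    by (simp only: orthogonal_matrix_conj_cancel(1)[OF U])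
  finally show ?thesis
    by (simp only: column_mult_diag_mat)
qed

lemma orthogonal_column_nonzero:
  assumes "orthogonal_matrix (U :: real^'n^'n)"
  shows "column j U \<noteq> 0"
proof -
  have "norm (column j U) = 1"
    using assms by (simp add: orthogonal_matrix_orthonormal_columns)
  then show ?thesis
    by auto
qed

lemma invariant_subspace_has_eigenvector:
  fixes M :: "real^'n^'n"
  assumes sym: "transpose M = M" and W: "subspace W" and inv: "\<And>x. x \<in> W \<Longrightarrow> M *v x \<in> W"
    and w: "w \<in> W" "w \<noteq> 0"
  obtains x lam where "x \<in> W" "norm x = 1" "M *v x = lam *\<^sub>R x"
proof -
  define K where "K = W \<inter> sphere 0 1"
  have "compact K"
    unfolding K_def using compact_Int_closed[OF compact_sphere closed_subspace[OF W]]
    by (simp add: inf_commute)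
  moreover have "K \<noteq> {}"
  proof -
    have "(1 / norm w) *\<^sub>R w \<in> K"
      using w W unfolding K_def by (auto simp: subspace_scale)
    then show ?thesis
      by blast
  qed
  moreover have "continuous_on K (\<lambda>x. x \<bullet> (M *v x))"
    by (auto intro!: continuous_intros)
  ultimately obtain x0 where x0: "x0 \<in> K" and max: "\<And>y. y \<in> K \<Longrightarrow> y \<bullet> (M *v y) \<le> x0 \<bullet> (M *v x0)"
    using continuous_attains_sup by metis
  define lam where "lam = x0 \<bullet> (M *v x0)"
  have x0W: "x0 \<in> W" and x0_norm: "norm x0 = 1"
    using x0 by (auto simp: K_def)
  have rayleigh: "z \<bullet> (M *v z) \<le> lam * (z \<bullet> z)" if "z \<in> W" for z
  proof (cases "z = 0")
    case False
    define u where "u = (1 / norm z) *\<^sub>R z"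
    have "u \<in> K"
      using that False W unfolding K_def u_def by (auto simp: subspace_scale)
    then have "u \<bullet> (M *v u) \<le> lam"
      using max lam_def by blast
    moreover have "z = norm z *\<^sub>R u"
      using False unfolding u_def by simp
    then have "z \<bullet> (M *v z) = (norm z * norm z) * (u \<bullet> (M *v u))"
      by (metis inner_scaleR_left inner_scaleR_right matrix_vector_mult_scaleR mult.assoc)
    moreover have "z \<bullet> z = norm z * norm z"
      by (simp add: dot_square_norm power2_eq_square)
    ultimately show ?thesis
      by (metis mult.commute mult_left_mono zero_le_square)
  qed simp
  txt \<open>The residual y of the Rayleigh maximiser x0 vanishes: along the line x0 + t y the
    Rayleigh inequality becomes a quadratic in t whose linear coefficient is 2 (y \<bullet> y).\<close>
  define y where "y = M *v x0 - lam *\<^sub>R x0"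
  have yW: "y \<in> W"
    unfolding y_def using x0W inv W by (simp add: subspace_diff subspace_scale)
  have y_lam: "y \<bullet> (M *v x0) = y \<bullet> y + lam * (y \<bullet> x0)"
    unfolding y_def by (simp add: inner_diff_right inner_diff_left algebra_simps)
  have "2 * t * (y \<bullet> y) + t * t * (y \<bullet> (M *v y) - lam * (y \<bullet> y)) \<le> 0" for t
  proof -
    have "x0 + t *\<^sub>R y \<in> W"
      using x0W yW W by (simp add: subspace_add subspace_scale)
    from rayleigh[OF this]
    have "(x0 + t *\<^sub>R y) \<bullet> (M *v (x0 + t *\<^sub>R y)) \<le> lam * ((x0 + t *\<^sub>R y) \<bullet> (x0 + t *\<^sub>R y))" .
    moreover have "(x0 + t *\<^sub>R y) \<bullet> (M *v (x0 + t *\<^sub>R y))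
        = lam + 2 * t * (y \<bullet> (M *v x0)) + t * t * (y \<bullet> (M *v y))"
      using symmetric_matrix_inner[OF sym, of x0 y] unfolding lam_def
      by (simp add: matrix_vector_right_distrib matrix_vector_mult_scaleR inner_add_left
          inner_add_right algebra_simps inner_commute)
    moreover have "(x0 + t *\<^sub>R y) \<bullet> (x0 + t *\<^sub>R y) = 1 + 2 * t * (y \<bullet> x0) + t * t * (y \<bullet> y)"
      using x0_norm norm_eq_1[of x0]
      by (simp add: inner_add_left inner_add_right algebra_simps inner_commute)
    ultimately have "lam + 2 * t * (y \<bullet> (M *v x0)) + t * t * (y \<bullet> (M *v y))
        \<le> lam * (1 + 2 * t * (y \<bullet> x0) + t * t * (y \<bullet> y))"
      by (simp only:)
    then show ?thesis
      unfolding y_lam by (simp add: algebra_simps)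
  qed
  then have "y \<bullet> y = 0"
    by (intro nonneg_eq_0_if_quadratic_le_0) auto
  then have "M *v x0 = lam *\<^sub>R x0"
    unfolding y_def by simp
  with x0W x0_norm that show ?thesis
    by blast
qed

lemma symmetric_matrix_orthonormal_eigenvectors:
  fixes M :: "real^'n^'n"
  assumes sym: "transpose M = M" and "finite S"
  shows "\<exists>(u :: 'n \<Rightarrow> real^'n) mu. (\<forall>i\<in>S. norm (u i) = 1 \<and> M *v u i = mu i *\<^sub>R u i)
           \<and> (\<forall>i\<in>S. \<forall>j\<in>S. i \<noteq> j \<longrightarrow> orthogonal (u i) (u j))"
  using \<open>finite S\<close>
proof (induction S rule: finite_induct)
  case (insert i S)
  then obtain u mu where eigen: "\<And>j. j \<in> S \<Longrightarrow> norm (u j) = 1 \<and> M *v u j = mu j *\<^sub>R u j"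
    and orth: "\<And>j k. j \<in> S \<Longrightarrow> k \<in> S \<Longrightarrow> j \<noteq> k \<Longrightarrow> orthogonal (u j) (u k)"
    by metis
  define W where "W = {y. \<forall>x \<in> u ` S. orthogonal x y}"
  have W: "subspace W"
    unfolding W_def by (rule subspace_orthogonal_to_vectors)
  have W_inv: "M *v x \<in> W" if "x \<in> W" for x
  proof -
    have "u j \<bullet> (M *v x) = mu j * (u j \<bullet> x)" if "j \<in> S" for j
      using symmetric_matrix_inner[OF sym, of "u j" x] eigen[OF that] by simp
    with that show ?thesis
      unfolding W_def orthogonal_def by auto
  qed
  have "S \<subset> UNIV"
    using insert.hyps(2) by auto
  then have "card (u ` S) < CARD('n)"
    using card_image_le[OF insert.hyps(1), of u] psubset_card_mono[of UNIV S] by simp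
  moreover have "dim (u ` S) \<le> card (u ` S)"
    using insert.hyps(1) by (intro dim_le_card) (auto intro: span_base)
  ultimately have "dim (u ` S) < DIM(real^'n)"
    by simp
  then obtain w where "w \<noteq> 0" and "\<And>y. y \<in> span (u ` S) \<Longrightarrow> orthogonal y w"
    by (metis orthogonal_commute orthogonal_to_subspace_exists)
  then have "w \<in> W" "w \<noteq> 0"
    unfolding W_def by (auto intro: span_base)
  then obtain v lam where v: "v \<in> W" "norm v = 1" "M *v v = lam *\<^sub>R v"
    using invariant_subspace_has_eigenvector[OF sym W W_inv] by metis
  define u' where "u' = u(i := v)"
  define mu' where "mu' = mu(i := lam)"
  have "norm (u' j) = 1 \<and> M *v u' j = mu' j *\<^sub>R u' j" if "j \<in> insert i S" for j
    using that eigen v unfolding u'_def mu'_def by (cases "j = i") auto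
  moreover have "orthogonal (u' j) (u' k)" if "j \<in> insert i S" "k \<in> insert i S" "j \<noteq> k" for j k
  proof -
    have "orthogonal (u j) v" "orthogonal v (u j)" if "j \<in> S" for j
      using v(1) that unfolding W_def by (auto simp: orthogonal_commute)
    with that orth insert.hyps(2) show ?thesis
      unfolding u'_def by (cases "j = i"; cases "k = i") auto
  qed
  ultimately show ?case
    by blast
qed simp

lemma symmetric_matrix_diagonalizable:
  fixes M :: "real^'n^'n"
  assumes sym: "transpose M = M"
  obtains U d where "orthogonal_matrix U" "M = U ** diag_mat d ** transpose U"
proof -
  obtain u :: "'n \<Rightarrow> real^'n" and mu
    where eigen: "\<And>i. norm (u i) = 1 \<and> M *v u i = mu i *\<^sub>R u i"
      and orth: "\<And>i j. i \<noteq> j \<Longrightarrow> orthogonal (u i) (u j)"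
    using symmetric_matrix_orthonormal_eigenvectors[OF sym, of UNIV] by auto
  define U :: "real^'n^'n" where "U = transpose (\<chi> i. u i)"
  have col: "column j U = u j" for j
    by (simp add: U_def vec_eq_iff column_def transpose_def)
  have U: "orthogonal_matrix U"
    unfolding orthogonal_matrix_orthonormal_columns col using eigen orth by blast
  have "M ** U = U ** diag_mat mu"
    unfolding matrix_eq_iff_columns by (metis column_matrix_mult column_mult_diag_mat col eigen)
  then have "M = U ** diag_mat mu ** transpose U"
    by (metis U orthogonal_matrix_conj_cancel(2))
  with U that show ?thesis
    by blast
qed

lemma mfun_orthogonal_diag:
  fixes U :: "real^'n^'n"
  assumes U: "orthogonal_matrix U"
  shows "mfun f (U ** diag_mat d ** transpose U) = U ** diag_mat (\<lambda>i. f (d i)) ** transpose U"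
  unfolding mfun_def
proof (rule the_equality)
  have UU: "transpose U ** U = mat 1" "U ** transpose U = mat 1"
    using U by (simp_all add: orthogonal_matrix_def)
  show "\<forall>v lam. (U ** diag_mat d ** transpose U) *v v = lam *\<^sub>R v
          \<longrightarrow> (U ** diag_mat (\<lambda>i. f (d i)) ** transpose U) *v v = f lam *\<^sub>R v"
  proof (intro allI impI)
    fix v lam
    assume eigen: "(U ** diag_mat d ** transpose U) *v v = lam *\<^sub>R v"
    define c where "c = transpose U *v v"
    have "transpose U *v ((U ** diag_mat d ** transpose U) *v v) = diag_mat d *v c"
      unfolding c_def by (simp only: matrix_vector_mul_assoc matrix_mul_assoc UU matrix_mul_lid)
    then have "diag_mat d *v c = lam *\<^sub>R c"
      unfolding eigen c_def by (simp only: matrix_vector_mult_scaleR)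
    then have "d i * c $ i = lam * c $ i" for i
      by (simp add: diag_mat_vector_mult vec_eq_iff)
    then have "f (d i) * c $ i = f lam * c $ i" for i
      by (metis mult_cancel_right)
    then have diag_c: "diag_mat (\<lambda>i. f (d i)) *v c = f lam *\<^sub>R c"
      by (simp add: diag_mat_vector_mult vec_eq_iff)
    have "(U ** diag_mat (\<lambda>i. f (d i)) ** transpose U) *v v = U *v (diag_mat (\<lambda>i. f (d i)) *v c)"
      unfolding c_def by (simp only: matrix_vector_mul_assoc matrix_mul_assoc)
    also have "\<dots> = f lam *\<^sub>R (U *v c)"
      by (simp only: diag_c matrix_vector_mult_scaleR)
    also have "U *v c = v"
      unfolding c_def by (simp only: matrix_vector_mul_assoc UU matrix_vector_mul_lid)
    finally show "(U ** diag_mat (\<lambda>i. f (d i)) ** transpose U) *v v = f lam *\<^sub>R v" .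
  qed
next
  fix F
  assume F: "\<forall>v lam. (U ** diag_mat d ** transpose U) *v v = lam *\<^sub>R v \<longrightarrow> F *v v = f lam *\<^sub>R v"
  have "column j (F ** U) = column j (U ** diag_mat (\<lambda>i. f (d i)))" for j
  proof -
    have "column j (F ** U) = F *v column j U"
      by (rule column_matrix_mult)
    also have "\<dots> = f (d j) *\<^sub>R column j U"
      using F orthogonal_diag_column_eigenvector[OF U] by blast
    finally show ?thesis
      by (simp only: column_mult_diag_mat)
  qed
  then have FU: "F ** U = U ** diag_mat (\<lambda>i. f (d i))"
    using matrix_eq_iff_columns by blast
  have "F = F ** U ** transpose U"
    by (rule orthogonal_matrix_conj_cancel(2)[OF U, symmetric])
  also have "\<dots> = U ** diag_mat (\<lambda>i. f (d i)) ** transpose U"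
    by (simp only: FU)
  finally show "F = U ** diag_mat (\<lambda>i. f (d i)) ** transpose U" .
qed

lemma mfun_affine:
  fixes M :: "real^'n^'n"
  assumes sym: "transpose M = M"
  shows "mfun f (a *\<^sub>R mat 1 + b *\<^sub>R M) = mfun (\<lambda>x. f (a + b * x)) M"
proof -
  obtain U d where U: "orthogonal_matrix U" and M: "M = U ** diag_mat d ** transpose U"
    using symmetric_matrix_diagonalizable[OF sym] by blast
  have "U ** diag_mat (\<lambda>i. a + b * d i) ** transpose U
      = a *\<^sub>R (U ** mat 1 ** transpose U) + b *\<^sub>R (U ** diag_mat d ** transpose U)"
    unfolding diag_mat_add diag_mat_scale diag_mat_const by (simp only: matrix_mult_linear_simps)
  also have "\<dots> = a *\<^sub>R mat 1 + b *\<^sub>R M"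
    using U by (simp add: M orthogonal_matrix_def)
  finally have shifted: "a *\<^sub>R mat 1 + b *\<^sub>R M = U ** diag_mat (\<lambda>i. a + b * d i) ** transpose U" ..
  have "mfun f (a *\<^sub>R mat 1 + b *\<^sub>R M) = U ** diag_mat (\<lambda>i. f (a + b * d i)) ** transpose U"
    unfolding shifted by (rule mfun_orthogonal_diag[OF U])
  also have "\<dots> = mfun (\<lambda>x. f (a + b * x)) M"
    unfolding M by (rule mfun_orthogonal_diag[OF U, symmetric])
  finally show ?thesis .
qed

lemma matrix_inv_eq:
  fixes A B :: "real^'n^'n"
  assumes AB: "A ** B = mat 1"
  shows "matrix_inv A = B"
proof -
  have BA: "B ** A = mat 1"
    using AB matrix_left_right_inverse by blast
  have "A ** matrix_inv A = mat 1 \<and> matrix_inv A ** A = mat 1"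
    unfolding matrix_inv_def by (rule someI[of _ B]) (use AB BA in blast)
  then have "matrix_inv A ** (A ** B) = B"
    by (simp add: matrix_mul_assoc)
  with AB show ?thesis
    by simp
qed

lemma matrix_inv_congruence:
  fixes L G H :: "real^'n^'n"
  assumes L: "invertible L" and GH: "G ** H = mat 1"
  shows "matrix_inv (L ** G ** transpose L) = transpose (matrix_inv L) ** H ** matrix_inv L"
proof (rule matrix_inv_eq)
  obtain L' where L': "L ** L' = mat 1" "L' ** L = mat 1"
    using L invertible_def by blast
  have inv: "matrix_inv L = L'"
    using matrix_inv_eq[OF L'(1)] .
  have T: "transpose L ** transpose L' = mat 1"
    using arg_cong[OF L'(2), of transpose] by (simp add: matrix_transpose_mul)
  have "L ** G ** transpose L ** (transpose L' ** H ** L')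
      = L ** G ** (transpose L ** transpose L') ** H ** L'"
    by (simp add: matrix_mul_assoc)
  also have "\<dots> = L ** (G ** H) ** L'"
    by (simp add: T matrix_mul_assoc)
  finally show "L ** G ** transpose L ** (transpose (matrix_inv L) ** H ** matrix_inv L) = mat 1"
    by (simp add: inv GH L'(1))
qed

lemma psd_congruence:
  fixes S X :: "real^'n^'n"
  assumes "psd S"
  shows "psd (transpose X ** S ** X)"
  unfolding psd_def
proof
  show "transpose (transpose X ** S ** X) = transpose X ** S ** X"
    using assms by (simp add: psd_def matrix_transpose_mul matrix_mul_assoc)
  show "\<forall>x. 0 \<le> x \<bullet> ((transpose X ** S ** X) *v x)"
  proof
    fix x
    have "x \<bullet> ((transpose X ** S ** X) *v x) = (X *v x) \<bullet> (S *v (X *v x))"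
      by (simp only: matrix_vector_mul_assoc[symmetric] inner_transpose_matrix_vector)
    then show "0 \<le> x \<bullet> ((transpose X ** S ** X) *v x)"
      using assms by (simp add: psd_def)
  qed
qed

lemma psd_diag_mat: "(\<And>i. 0 \<le> e i) \<Longrightarrow> psd (diag_mat e)"
  by (auto simp: psd_def inner_vec_def diag_mat_vector_mult intro!: sum_nonneg)
    (metis mult.left_commute mult_nonneg_nonneg zero_le_square)

lemma loewner_le_scalar_quadratic:
  assumes "loewner_le (d *\<^sub>R mat 1) S"
  shows "d * (x \<bullet> x) \<le> x \<bullet> (S *v x)"
proof -
  have "0 \<le> x \<bullet> ((S - d *\<^sub>R mat 1) *v x)"
    using assms unfolding loewner_le_def psd_def by blast
  also have "(S - d *\<^sub>R mat 1) *v x = S *v x - d *\<^sub>R x"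
    by (simp add: matrix_vector_mult_diff_rdistrib flip: scaleR_matrix_vector_assoc)
  finally show ?thesis
    by (simp add: inner_diff_right)
qed

lemma loewner_le_scalar_eigenvalue:
  assumes "loewner_le (d *\<^sub>R mat 1) S" and "S *v w = mu *\<^sub>R w" and "w \<noteq> 0"
  shows "d \<le> mu"
  using loewner_le_scalar_quadratic[OF assms(1), of w] assms(2,3) by simp

lemma eigenvalue_abs_le_specnorm:
  assumes "S *v w = mu *\<^sub>R w" and "w \<noteq> 0"
  shows "\<bar>mu\<bar> \<le> specnorm S"
proof -
  have "norm (S *v w) \<le> specnorm S * norm w"
    unfolding specnorm_def by (rule onorm[OF matrix_vector_mul_bounded_linear])
  with assms show ?thesis
    by simp
qed

lemma invertible_if_loewner_ge_scalar:
  fixes L :: "real^'n^'n"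
  assumes "d > 0" and "loewner_le (d *\<^sub>R mat 1) (L ** transpose L)"
  shows "invertible L"
proof -
  have "x = 0" if "transpose L *v x = 0" for x
  proof -
    have "x \<bullet> ((L ** transpose L) *v x) = (transpose L *v x) \<bullet> (transpose L *v x)"
      using inner_transpose_matrix_vector[of x "transpose L"]
      by (simp flip: matrix_vector_mul_assoc)
    with that loewner_le_scalar_quadratic[OF assms(2), of x] \<open>d > 0\<close> have "x \<bullet> x \<le> 0"
      by (simp add: mult_le_0_iff)
    then show ?thesis
      by (metis inner_eq_zero_iff inner_ge_zero order_antisym)
  qed
  then have "invertible (transpose L)"
    unfolding invertible_left_inverse matrix_left_invertible_ker by blast
  then show ?thesis
    using transpose_invertible[of "transpose L"] by simp
qed

lemma eigenvector_transpose_mult_swap: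
  fixes L :: "real^'n^'n"
  assumes "(transpose L ** L) *v e = mu *\<^sub>R e"
  shows "(L ** transpose L) *v (L *v e) = mu *\<^sub>R (L *v e)"
  using arg_cong[OF assms, of "(*v) L"]
  by (simp add: matrix_vector_mul_assoc matrix_mul_assoc matrix_vector_mult_scaleR)

lemma gram_eigenvalue_bounds:
  fixes L :: "real^'n^'n"
  assumes d: "d > 0" and lower: "loewner_le (d *\<^sub>R mat 1) (L ** transpose L)"
    and eigen: "(transpose L ** L) *v e = mu *\<^sub>R e" "e \<noteq> 0"
  shows "d \<le> mu" and "mu \<le> specnorm (L ** transpose L)"
proof -
  have nonzero: "L *v e \<noteq> 0"
    using inj_matrix_vector_mult[OF invertible_if_loewner_ge_scalar[OF d lower]] eigen(2)
    by (metis injD matrix_vector_mult_0_right)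
  note swap = eigenvector_transpose_mult_swap[OF eigen(1)]
  show "d \<le> mu"
    by (rule loewner_le_scalar_eigenvalue[OF lower swap nonzero])
  show "mu \<le> specnorm (L ** transpose L)"
    using eigenvalue_abs_le_specnorm[OF swap nonzero] by simp
qed

lemma inverse_gap_le_diag:
  fixes L U :: "real^'n^'n"
  assumes L: "invertible L" and U: "orthogonal_matrix U"
    and gram: "transpose L ** L = U ** diag_mat mu ** transpose U"
    and g: "\<And>i. g i \<noteq> 0" and entry: "\<And>i. 0 \<le> c * mu i - 1 + 1 / g i"
  shows "loewner_le (matrix_inv (L ** transpose L)
      - matrix_inv (L ** (U ** diag_mat g ** transpose U) ** transpose L)) (c *\<^sub>R mat 1)"
proof -
  define Li where "Li = matrix_inv L"
  define H where "H = U ** diag_mat (\<lambda>i. 1 / g i) ** transpose U"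
  have UU: "transpose U ** U = mat 1" "U ** transpose U = mat 1"
    using U by (simp_all add: orthogonal_matrix_def)
  have "U ** diag_mat g ** transpose U ** H = U ** (diag_mat g ** diag_mat (\<lambda>i. 1 / g i)) ** transpose U"
    unfolding H_def by (simp add: matrix_mul_assoc orthogonal_matrix_conj_cancel(1)[OF U])
  then have GH: "U ** diag_mat g ** transpose U ** H = mat 1"
    using g by (simp add: diag_mat_mult diag_mat_const UU(2))
  obtain L' where L': "L ** L' = mat 1"
    using L invertible_def by blast
  then have "L ** Li = mat 1"
    unfolding Li_def using matrix_inv_eq[OF L'] by simp
  then have LiL: "transpose Li ** (transpose L ** L) ** Li = mat 1"
    by (metis matrix_mul_assoc matrix_mul_rid matrix_transpose_mul transpose_mat)
  have "c *\<^sub>R mat 1 - (matrix_inv (L ** transpose L)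
        - matrix_inv (L ** (U ** diag_mat g ** transpose U) ** transpose L))
      = transpose Li ** (c *\<^sub>R (transpose L ** L) - mat 1 + H) ** Li"
    using matrix_inv_congruence[OF L GH] matrix_inv_congruence[OF L, of "mat 1" "mat 1"]
    by (simp add: Li_def matrix_mult_linear_simps LiL[unfolded Li_def])
  also have "c *\<^sub>R (transpose L ** L) - mat 1 + H
      = U ** diag_mat (\<lambda>i. c * mu i - 1 + 1 / g i) ** transpose U"
    unfolding gram H_def diag_mat_add diag_mat_diff diag_mat_scale diag_mat_const
    by (simp add: matrix_mult_linear_simps UU(2))
  finally have gap: "c *\<^sub>R mat 1 - (matrix_inv (L ** transpose L)
        - matrix_inv (L ** (U ** diag_mat g ** transpose U) ** transpose L))
      = transpose (transpose U ** Li) ** diag_mat (\<lambda>i. c * mu i - 1 + 1 / g i) ** (transpose U ** Li)"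
    by (simp add: matrix_transpose_mul matrix_mul_assoc)
  show ?thesis
    unfolding loewner_le_def gap by (intro psd_congruence psd_diag_mat entry)
qed

lemma inverse_gap_le_secant_slope:
  fixes L :: "real^'n^'n" and f g :: "real \<Rightarrow> real"
  assumes d: "d > 0" and lower: "loewner_le (d *\<^sub>R mat 1) (L ** transpose L)"
    and convex: "convex_on {0..specnorm (L ** transpose L)} f" and f0: "f 0 = 1"
    and g: "\<And>x. d \<le> x \<Longrightarrow> x \<le> specnorm (L ** transpose L) \<Longrightarrow> f x > 0 \<and> g x = 1 / f x"
  shows "loewner_le (matrix_inv (L ** transpose L) - matrix_inv (L ** mfun g (transpose L ** L) ** transpose L))
           (((1 - f d) / d) *\<^sub>R mat 1)"
proof -
  have "transpose (transpose L ** L) = transpose L ** L"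
    by (simp add: matrix_transpose_mul)
  then obtain U mu where U: "orthogonal_matrix U"
    and gram: "transpose L ** L = U ** diag_mat mu ** transpose U"
    by (rule symmetric_matrix_diagonalizable)
  have mu: "d \<le> mu i" "mu i \<le> specnorm (L ** transpose L)" for i
    using gram_eigenvalue_bounds[OF d lower, where e = "column i U" and mu = "mu i"] gram
      orthogonal_diag_column_eigenvector[OF U] orthogonal_column_nonzero[OF U] by simp_all
  have secant: "1 - f (mu i) \<le> (1 - f d) / d * mu i" for i
    using convex_on_secant_from_0[of "mu i" f d] convex_on_subset[OF convex] mu[of i] d f0 by simp
  have "0 \<le> (1 - f d) / d * mu i - 1 + 1 / g (mu i)" "g (mu i) \<noteq> 0" for i
    using secant[of i] g[OF mu(1)[of i] mu(2)[of i]] by simp_all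
  from inverse_gap_le_diag[OF invertible_if_loewner_ge_scalar[OF d lower] U gram this(2,1)]
  show ?thesis
    by (simp add: gram mfun_orthogonal_diag[OF U])
qed

lemma inverse_gap_le_powr:
  fixes L :: "real^'n^'n"
  assumes d: "d > 0" and lower: "loewner_le (d *\<^sub>R mat 1) (L ** transpose L)"
    and p: "1 \<le> p" and a: "0 \<le> a" "a * specnorm (L ** transpose L) < 1"
  shows "loewner_le (matrix_inv (L ** transpose L)
      - matrix_inv (L ** mfun (\<lambda>x. x powr (- p)) (mat 1 - a *\<^sub>R (transpose L ** L)) ** transpose L))
      (((1 - (1 - a * d) powr p) / d) *\<^sub>R mat 1)"
proof -
  define s where "s = specnorm (L ** transpose L)"
  define f where "f x = (1 + (- a) * x) powr p" for x
  have pos: "0 < 1 + (- a) * x" if "x \<in> {0..s}" for x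
  proof -
    have "a * x \<le> a * s"
      using that a(1) by (intro mult_left_mono) auto
    with a(2) show ?thesis
      by (simp add: s_def)
  qed
  have "mfun (\<lambda>x. x powr (- p)) (mat 1 - a *\<^sub>R (transpose L ** L))
      = mfun (\<lambda>x. (1 + (- a) * x) powr (- p)) (transpose L ** L)"
    using mfun_affine[of "transpose L ** L" "\<lambda>x. x powr (- p)" 1 "- a"]
    by (simp add: matrix_transpose_mul)
  moreover have "convex_on {0..s} f"
    unfolding f_def using pos by (intro convex_on_affine_compose[OF powr_convex[OF p]]) auto
  moreover have "f x > 0 \<and> (1 + (- a) * x) powr (- p) = 1 / f x" if "x \<in> {0..s}" for x
    using pos[OF that] by (simp add: f_def powr_minus_divide)
  ultimately show ?thesis
    using inverse_gap_le_secant_slope[OF d lower, of f] d by (simp add: f_def s_def)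
qed

lemma inverse_gap_le_exp:
  fixes L :: "real^'n^'n"
  assumes d: "d > 0" and lower: "loewner_le (d *\<^sub>R mat 1) (L ** transpose L)"
  shows "loewner_le (matrix_inv (L ** transpose L)
      - matrix_inv (L ** mfun exp (\<theta> *\<^sub>R (transpose L ** L)) ** transpose L))
      (((1 - exp (- \<theta> * d)) / d) *\<^sub>R mat 1)"
proof -
  define f where "f x = exp (0 + (- \<theta>) * x)" for x
  have "mfun exp (\<theta> *\<^sub>R (transpose L ** L)) = mfun (\<lambda>x. exp (0 + \<theta> * x)) (transpose L ** L)"
    using mfun_affine[of "transpose L ** L" exp 0 \<theta>] by (simp add: matrix_transpose_mul)
  moreover have "convex_on {0..specnorm (L ** transpose L)} f"
    unfolding f_def by (intro convex_on_affine_compose[OF exp_convex]) auto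
  moreover have "f x > 0 \<and> exp (0 + \<theta> * x) = 1 / f x" for x
    by (simp add: f_def exp_minus inverse_eq_divide)
  ultimately show ?thesis
    using inverse_gap_le_secant_slope[OF d lower, of f] d by (simp add: f_def)
qed

theorem lemma3:
  fixes A :: "real^'n^'n" and B :: "real^'m^'n" and C :: "real^'n^'p" and D :: "real^'m^'p"
    and tau c dbar :: real and k :: nat
    and P V L :: "nat \<Rightarrow> real^'n^'n" and theta :: "nat \<Rightarrow> real"
  assumes DD: "posdef (D ** transpose D)"
    and BD: "B ** transpose D = 0"
    and tau: "0 \<le> tau" "tau \<le> 1"
    and c: "c > 0"
    and V0: "posdef (V 0)"
    and Prec: "\<And>j. P (Suc j) = A ** matrix_inv (matrix_inv (V j)
                     + transpose C ** matrix_inv (D ** transpose D) ** C) ** transpose A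
                   + B ** transpose B"
    and Lfac: "\<And>j. P (Suc j) = L j ** transpose (L j)"
    and th_pos: "\<And>j. theta j > 0"
    and th_rng: "\<And>j. theta j * (1 - tau) * specnorm (P (Suc j)) < 1"
    and th_eq: "\<And>j. gamma tau (P (Suc j)) (L j) (theta j) = c"
    and th_uniq: "\<And>j t. t > 0 \<Longrightarrow> t * (1 - tau) * specnorm (P (Suc j)) < 1 \<Longrightarrow>
                     gamma tau (P (Suc j)) (L j) t = c \<Longrightarrow> t = theta j"
    and Vrec: "\<And>j. V (Suc j) =
        (if tau < 1 then
           L j ** mfun (\<lambda>x. x powr (1 / (tau - 1)))
                    (mat 1 - (theta j * (1 - tau)) *\<^sub>R (transpose (L j) ** L j)) ** transpose (L j)
         else
           L j ** mfun exp (theta j *\<^sub>R (transpose (L j) ** L j)) ** transpose (L j))"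
    and dbar: "dbar > 0"
    and Pk: "loewner_le (dbar *\<^sub>R mat 1) (P (Suc k))"
  shows "loewner_le (matrix_inv (P (Suc k)) - matrix_inv (V (Suc k)))
          ((if tau < 1 then
              (1 - (1 - theta k * (1 - tau) * dbar) powr (1 / (1 - tau))) / dbar
            else (1 - exp (- theta k * dbar)) / dbar) *\<^sub>R mat 1)"
proof -
  txt \<open>Only the factorisation of P(k+1), the update of V(k+1) and the range condition on
    theta k enter.\<close>
  have lower: "loewner_le (dbar *\<^sub>R mat 1) (L k ** transpose (L k))"
    using Pk Lfac[of k] by simp
  show ?thesis
  proof (cases "tau < 1")
    case True
    have "1 / (tau - 1) = - (1 / (1 - tau))" "1 \<le> 1 / (1 - tau)" "0 \<le> theta k * (1 - tau)"
      using True tau th_pos[of k] by (simp_all add: field_simps)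
    with inverse_gap_le_powr[OF dbar lower, of "1 / (1 - tau)" "theta k * (1 - tau)"]
    show ?thesis
      using th_rng[of k] Vrec[of k] Lfac[of k] True by simp
  next
    case False
    with inverse_gap_le_exp[OF dbar lower, of "theta k"] show ?thesis
      using Vrec[of k] Lfac[of k] by simp
  qed
qed

end
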